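(* Let $A=\bigoplus_{m\in\omega_M}A_m\chi^m$ be an effectively $M$-graded affine $\mathbf k$-algebra with weight cone $\omega$, and let $\partial_1,\partial_2$ be homogeneous locally nilpotent derivations of $A$ of degrees $e_1,e_2\in M$ respectively (of arbitrary, not necessarily fiber, type). If the line $\{te_1+(1-t)e_2 : t\in\mathbb Q\}\subseteq M_{\mathbb Q}$ does not intersect the weight cone $\omega$, then $\partial_1+\partial_2$ is locally nilpotent.
   Context: $\mathbf k$ is an algebraically closed field of characteristic zero, $M$ a lattice, $M_{\mathbb Q}=M\otimes\mathbb Q$; $A$ is a finitely generated commutative $\mathbf k$-domain with an effective $M$-grading; the weight cone $\omega\subseteq M_{\mathbb Q}$ is the cone spanned by $\{m\in M:A_m\neq0\}$ and $\omega_M=\omega\cap M$. A derivation $\partial$ is homogeneous of degree $e$ if it maps the degree-$m$ component into the degree-$(m+e)$ component for all $m$; it is locally nilpotent if every element is killed by some power of $\partial$. *)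

theory Defs
  imports "HOL-Analysis.Finite_Cartesian_Product" "HOL-Computational_Algebra.Polynomial"
begin

text \<open>The algebra A is the whole ring of type 'a (an integral domain of
characteristic zero). The base field k is a subfield K of 'a (the image of k in A).
The lattice M is int^'n (free abelian group of rank CARD('n)), and M_Q = rat^'n.\<close>

definition subfield :: "'a::idom set \<Rightarrow> bool" where
  "subfield K \<longleftrightarrow> 0 \<in> K \<and> 1 \<in> K \<and> (\<forall>x\<in>K. \<forall>y\<in>K. x + y \<in> K \<and> x * y \<in> K \<and> - x \<in> K)
     \<and> (\<forall>x\<in>K. x \<noteq> 0 \<longrightarrow> (\<exists>y\<in>K. x * y = 1))"

definition alg_closed_subfield :: "'a::idom set \<Rightarrow> bool" where
  "alg_closed_subfield K \<longleftrightarrow> subfield K \<and>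
     (\<forall>p::'a poly. (\<forall>i. coeff p i \<in> K) \<and> degree p \<ge> 1 \<longrightarrow> (\<exists>x\<in>K. poly p x = 0))"

inductive_set subalg_gen :: "'a::comm_ring_1 set \<Rightarrow> 'a set \<Rightarrow> 'a set" for K S where
  base_K: "x \<in> K \<Longrightarrow> x \<in> subalg_gen K S"
| base_S: "x \<in> S \<Longrightarrow> x \<in> subalg_gen K S"
| add: "x \<in> subalg_gen K S \<Longrightarrow> y \<in> subalg_gen K S \<Longrightarrow> x + y \<in> subalg_gen K S"
| mult: "x \<in> subalg_gen K S \<Longrightarrow> y \<in> subalg_gen K S \<Longrightarrow> x * y \<in> subalg_gen K S"
| neg: "x \<in> subalg_gen K S \<Longrightarrow> - x \<in> subalg_gen K S"

definition finitely_generated_algebra :: "'a::comm_ring_1 set \<Rightarrow> bool" where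
  "finitely_generated_algebra K \<longleftrightarrow> (\<exists>S. finite S \<and> subalg_gen K S = UNIV)"

definition K_subspace :: "'a::comm_ring_1 set \<Rightarrow> 'a set \<Rightarrow> bool" where
  "K_subspace K V \<longleftrightarrow> 0 \<in> V \<and> (\<forall>x\<in>V. \<forall>y\<in>V. x + y \<in> V) \<and> (\<forall>c\<in>K. \<forall>x\<in>V. c * x \<in> V)"

definition graded_algebra :: "'a::comm_ring_1 set \<Rightarrow> (int^'n \<Rightarrow> 'a set) \<Rightarrow> bool" where
  "graded_algebra K G \<longleftrightarrow>
     (\<forall>m. K_subspace K (G m)) \<and>
     K \<subseteq> G 0 \<and>
     (\<forall>m m'. \<forall>x\<in>G m. \<forall>y\<in>G m'. x * y \<in> G (m + m')) \<and>
     (\<forall>a. \<exists>!f. finite {m. f m \<noteq> 0} \<and> (\<forall>m. f m \<in> G m) \<and> a = (\<Sum>m\<in>{m. f m \<noteq> 0}. f m))"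

definition weights :: "(int^'n \<Rightarrow> 'a::zero set) \<Rightarrow> (int^'n) set" where
  "weights G = {m. G m \<noteq> {0}}"

definition effective :: "(int^'n \<Rightarrow> 'a::zero set) \<Rightarrow> bool" where
  "effective G \<longleftrightarrow> (\<forall>v::int^'n. \<exists>F z. finite F \<and> F \<subseteq> weights G \<and>
      (\<forall>i. v $ i = (\<Sum>w\<in>F. z w * w $ i)))"

definition weight_cone :: "(int^'n \<Rightarrow> 'a::zero set) \<Rightarrow> (rat^'n) set" where
  "weight_cone G = {v. \<exists>F c. finite F \<and> F \<subseteq> weights G \<and> (\<forall>w\<in>F. c w \<ge> (0::rat)) \<and>
      (\<forall>i. v $ i = (\<Sum>w\<in>F. c w * of_int (w $ i)))}"

definition K_derivation :: "'a::comm_ring_1 set \<Rightarrow> ('a \<Rightarrow> 'a) \<Rightarrow> bool" where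
  "K_derivation K D \<longleftrightarrow> (\<forall>x y. D (x + y) = D x + D y) \<and> (\<forall>x y. D (x * y) = x * D y + y * D x)
     \<and> (\<forall>c\<in>K. D c = 0)"

definition homogeneous_of_degree :: "(int^'n \<Rightarrow> 'a set) \<Rightarrow> ('a \<Rightarrow> 'a) \<Rightarrow> int^'n \<Rightarrow> bool" where
  "homogeneous_of_degree G D e \<longleftrightarrow> (\<forall>m. \<forall>x\<in>G m. D x \<in> G (m + e))"

definition locally_nilpotent :: "('a::zero \<Rightarrow> 'a) \<Rightarrow> bool" where
  "locally_nilpotent D \<longleftrightarrow> (\<forall>a. \<exists>n. (D ^^ n) a = 0)"

definition line_through :: "int^'n \<Rightarrow> int^'n \<Rightarrow> (rat^'n) set" where
  "line_through e1 e2 = {v. \<exists>t::rat. \<forall>i. v $ i = t * of_int (e1 $ i) + (1 - t) * of_int (e2 $ i)}"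

end

theory Submission
  imports Defs
begin

text \<open>
  (1) Since A is finitely generated, the weights are nonnegative integer combinations of a
      finite set W of weights (the homogeneous components of the generators).
  (2) D^n maps A_m into the sum of the components of degrees m + j e1 + (n - j) e2, j \<le> n.
  (3) If for every n one of these degrees were a weight, Dickson's lemma applied to the
      coefficient vectors over W would produce p < q whose difference
      a e1 + b e2 (a, b \<ge> 0, a + b > 0) lies in the cone of W; rescaling by 1/(a+b) gives a
      point of the line inside the weight cone.  Hence D^n kills A_m for large n.
  (4) Every element is a finite sum of homogeneous ones, so D is locally nilpotent.
\<close>

lemma graded_algebra_subspace:
  "graded_algebra K G \<Longrightarrow> K_subspace K (G m)"
  unfolding graded_algebra_def by blast

lemma graded_algebra_zero:
  "graded_algebra K G \<Longrightarrow> 0 \<in> G m"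
  using graded_algebra_subspace unfolding K_subspace_def by blast

lemma graded_algebra_add:
  "graded_algebra K G \<Longrightarrow> x \<in> G m \<Longrightarrow> y \<in> G m \<Longrightarrow> x + y \<in> G m"
  using graded_algebra_subspace unfolding K_subspace_def by blast

lemma graded_algebra_mult:
  "graded_algebra K G \<Longrightarrow> x \<in> G m \<Longrightarrow> y \<in> G m' \<Longrightarrow> x * y \<in> G (m + m')"
  unfolding graded_algebra_def by blast

lemma graded_algebra_decomposition:
  assumes "graded_algebra K G"
  obtains f where "finite {m. f m \<noteq> 0}" "\<And>m. f m \<in> G m" "a = (\<Sum>m\<in>{m. f m \<noteq> 0}. f m)"
  using assms unfolding graded_algebra_def by metis

definition graded_span :: "(int^'n \<Rightarrow> 'a::comm_ring_1 set) \<Rightarrow> (int^'n) set \<Rightarrow> 'a set" where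
  "graded_span G P = {a. \<exists>f F. finite F \<and> F \<subseteq> P \<and> (\<forall>m. f m \<in> G m) \<and> (\<forall>m. m \<notin> F \<longrightarrow> f m = 0)
      \<and> a = sum f F}"

lemma graded_span_zero:
  assumes "graded_algebra K G"
  shows "0 \<in> graded_span G P"
  unfolding graded_span_def using graded_algebra_zero[OF assms]
  by (intro CollectI exI[of _ "\<lambda>_. 0"] exI[of _ "{}"]) auto

lemma graded_span_homogeneous:
  assumes "graded_algebra K G" "m \<in> P" "x \<in> G m"
  shows "x \<in> graded_span G P"
  unfolding graded_span_def using assms graded_algebra_zero[OF assms(1)]
  by (intro CollectI exI[of _ "\<lambda>m'. if m' = m then x else 0"] exI[of _ "{m}"]) auto

lemma graded_span_mono:
  "P \<subseteq> Q \<Longrightarrow> graded_span G P \<subseteq> graded_span G Q"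
  unfolding graded_span_def by blast

lemma graded_span_add:
  assumes ga: "graded_algebra K G" and "x \<in> graded_span G P" "y \<in> graded_span G P"
  shows "x + y \<in> graded_span G P"
proof -
  from assms(2,3) obtain f F g F' where
    f: "finite F" "F \<subseteq> P" "\<forall>m. f m \<in> G m" "\<forall>m. m \<notin> F \<longrightarrow> f m = 0" "x = sum f F"
    and g: "finite F'" "F' \<subseteq> P" "\<forall>m. g m \<in> G m" "\<forall>m. m \<notin> F' \<longrightarrow> g m = 0" "y = sum g F'"
    unfolding graded_span_def by blast
  have "x = sum f (F \<union> F')" "y = sum g (F \<union> F')"
    using f g by (auto intro: sum.mono_neutral_left)
  then have "x + y = (\<Sum>m\<in>F \<union> F'. f m + g m)" by (simp add: sum.distrib)
  moreover have "\<forall>m. f m + g m \<in> G m" using f g graded_algebra_add[OF ga] by blast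
  ultimately show ?thesis unfolding graded_span_def using f g
    by (intro CollectI exI[of _ "\<lambda>m. f m + g m"] exI[of _ "F \<union> F'"]) auto
qed

lemma graded_span_sum:
  assumes ga: "graded_algebra K G" and "\<And>i. i \<in> A \<Longrightarrow> h i \<in> graded_span G P"
  shows "sum h A \<in> graded_span G P"
  using assms(2)
proof (induction A rule: infinite_finite_induct)
  case (insert i A)
  then show ?case by (simp add: graded_span_add[OF ga])
qed (simp_all add: graded_span_zero[OF ga])

text \<open>Negation is scalar multiplication by -1, an element of the subfield K.\<close>
lemma graded_span_neg:
  assumes sf: "subfield K" and ga: "graded_algebra K G" and "x \<in> graded_span G P"
  shows "- x \<in> graded_span G P"
proof -
  from assms(3) obtain f F where
    f: "finite F" "F \<subseteq> P" "\<forall>m. f m \<in> G m" "\<forall>m. m \<notin> F \<longrightarrow> f m = 0" "x = sum f F"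
    unfolding graded_span_def by blast
  have "-1 \<in> K" using sf unfolding subfield_def by blast
  then have "\<forall>m. (-1) * f m \<in> G m"
    using f(3) graded_algebra_subspace[OF ga] unfolding K_subspace_def by blast
  moreover have "- x = (\<Sum>m\<in>F. (-1) * f m)" using f(5) by (simp add: sum_negf)
  ultimately show ?thesis unfolding graded_span_def using f
    by (intro CollectI exI[of _ "\<lambda>m. (-1) * f m"] exI[of _ F]) auto
qed

text \<open>If the degree set P is closed under addition, a product of two elements of the span
  regroups into homogeneous products of degrees p + q with p, q \<in> P.\<close>
lemma graded_span_mult:
  assumes ga: "graded_algebra K G" and P_add: "\<And>p q. p \<in> P \<Longrightarrow> q \<in> P \<Longrightarrow> p + q \<in> P"
    and "x \<in> graded_span G P" "y \<in> graded_span G P"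
  shows "x * y \<in> graded_span G P"
proof -
  from assms(3,4) obtain f F g F' where
    f: "finite F" "F \<subseteq> P" "\<forall>m. f m \<in> G m" "x = sum f F"
    and g: "finite F'" "F' \<subseteq> P" "\<forall>m. g m \<in> G m" "y = sum g F'"
    unfolding graded_span_def by blast
  have xy: "x * y = (\<Sum>pq\<in>F \<times> F'. f (fst pq) * g (snd pq))"
    using f g by (simp add: sum_product sum.cartesian_product split_beta)
  have "f (fst pq) * g (snd pq) \<in> graded_span G P" if "pq \<in> F \<times> F'" for pq
    using that f g P_add graded_algebra_mult[OF ga]
    by (intro graded_span_homogeneous[OF ga, of "fst pq + snd pq"]) (auto simp: mem_Times_iff subset_iff)
  then show ?thesis unfolding xy by (rule graded_span_sum[OF ga])
qed

lemma subalg_gen_subset_graded_span: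
  assumes sf: "subfield K" and ga: "graded_algebra K G"
    and P_0: "0 \<in> P" and P_add: "\<And>p q. p \<in> P \<Longrightarrow> q \<in> P \<Longrightarrow> p + q \<in> P"
    and S: "S \<subseteq> graded_span G P"
  shows "subalg_gen K S \<subseteq> graded_span G P"
proof
  fix x assume "x \<in> subalg_gen K S"
  then show "x \<in> graded_span G P"
  proof (induction x rule: subalg_gen.induct)
    case (base_K x)
    then have "x \<in> G 0" using ga unfolding graded_algebra_def by blast
    then show ?case using graded_span_homogeneous[OF ga P_0] by blast
  qed (use S graded_span_add[OF ga] graded_span_mult[OF ga P_add] graded_span_neg[OF sf ga] in auto)
qed

text \<open>Uniqueness of the homogeneous decomposition: a nonzero homogeneous element of degree v
  lies in the span over P only if v \<in> P.\<close>
lemma degree_in_graded_span: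
  assumes ga: "graded_algebra K G" and x: "x \<in> G v" "x \<noteq> 0" "x \<in> graded_span G P"
  shows "v \<in> P"
proof -
  from x(3) obtain f F where
    f: "finite F" "F \<subseteq> P" "\<forall>m. f m \<in> G m" "\<forall>m. m \<notin> F \<longrightarrow> f m = 0" "x = sum f F"
    unfolding graded_span_def by blast
  define is_decomposition where "is_decomposition h \<longleftrightarrow>
      finite {m. h m \<noteq> 0} \<and> (\<forall>m. h m \<in> G m) \<and> x = (\<Sum>m\<in>{m. h m \<noteq> 0}. h m)" for h
  define single where "single m = (if m = v then x else 0)" for m
  have unique: "\<exists>!h. is_decomposition h"
    using ga unfolding graded_algebra_def is_decomposition_def by blast
  have supp: "{m. f m \<noteq> 0} \<subseteq> F" using f(4) by blast
  have "x = (\<Sum>m\<in>{m. f m \<noteq> 0}. f m)"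
    unfolding f(5) by (rule sum.mono_neutral_right[OF f(1) supp]) simp
  then have "is_decomposition f"
    unfolding is_decomposition_def using finite_subset[OF supp f(1)] f(3) by blast
  moreover have "{m. single m \<noteq> 0} = {v}" using x(2) by (auto simp: single_def)
  then have "is_decomposition single"
    unfolding is_decomposition_def using x(1) graded_algebra_zero[OF ga] by (simp add: single_def)
  ultimately have "f = single" using unique by blast
  then have "f v \<noteq> 0" using x(2) by (simp add: single_def)
  then show "v \<in> P" using f(2,4) by blast
qed

lemma graded_span_of_nonweights:
  assumes "P \<inter> weights G = {}" "x \<in> graded_span G P"
  shows "x = 0"
proof -
  from assms(2) obtain f F where
    f: "F \<subseteq> P" "\<forall>m. f m \<in> G m" "x = sum f F"
    unfolding graded_span_def by blast
  have "f m = 0" if "m \<in> F" for m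
    using that f assms(1) unfolding weights_def by auto
  then show "x = 0" using f(3) by simp
qed

definition nat_span :: "(int^'n) set \<Rightarrow> (int^'n) set" where
  "nat_span W = {v. \<exists>c::int^'n \<Rightarrow> nat. v = (\<Sum>w\<in>W. int (c w) *s w)}"

lemma nat_span_zero: "0 \<in> nat_span W"
  unfolding nat_span_def by (intro CollectI exI[of _ "\<lambda>_. 0"]) simp

lemma nat_span_add:
  assumes "p \<in> nat_span W" "q \<in> nat_span W"
  shows "p + q \<in> nat_span W"
proof -
  from assms obtain c d where "p = (\<Sum>w\<in>W. int (c w) *s w)" "q = (\<Sum>w\<in>W. int (d w) *s w)"
    unfolding nat_span_def by blast
  then have "p + q = (\<Sum>w\<in>W. int (c w + d w) *s w)"
    by (simp add: sum.distrib vector_sadd_rdistrib)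
  then show ?thesis unfolding nat_span_def by (intro CollectI exI[of _ "\<lambda>w. c w + d w"])
qed

lemma nat_span_generator:
  assumes "finite W" "w \<in> W"
  shows "w \<in> nat_span W"
proof -
  have "(\<Sum>u\<in>W. int (if u = w then 1 else 0) *s u) = (\<Sum>u\<in>W. if u = w then w else 0)"
    by (rule sum.cong) auto
  also have "\<dots> = w" using assms by simp
  finally show ?thesis unfolding nat_span_def by (intro CollectI exI) (rule sym)
qed

text \<open>Step (1): the degrees of the homogeneous components of a finite generating set
  generate a submonoid containing every weight.\<close>
theorem weights_finitely_generated:
  fixes K :: "'a::idom set" and G :: "int^'n \<Rightarrow> 'a set"
  assumes sf: "subfield K" and ga: "graded_algebra K G" and fg: "finitely_generated_algebra K"
  shows "\<exists>W. finite W \<and> W \<subseteq> weights G \<and> weights G \<subseteq> nat_span W"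
proof -
  obtain S where S: "finite S" "subalg_gen K S = UNIV"
    using fg unfolding finitely_generated_algebra_def by blast
  obtain comp where comp_fin: "\<And>a. finite {m. comp a m \<noteq> 0}" and comp_hom: "\<And>a m. comp a m \<in> G m"
    and comp_sum: "\<And>a. a = (\<Sum>m\<in>{m. comp a m \<noteq> 0}. comp a m)"
  proof -
    have "\<forall>a. \<exists>f. finite {m. f m \<noteq> 0} \<and> (\<forall>m. f m \<in> G m) \<and> a = (\<Sum>m\<in>{m. f m \<noteq> 0}. f m)"
      using ga unfolding graded_algebra_def by (blast dest: ex1_implies_ex)
    then show ?thesis using that by metis
  qed
  define W where "W = (\<Union>s\<in>S. {m. comp s m \<noteq> 0})"
  have fin: "finite W" unfolding W_def using S(1) comp_fin by blast
  have W_weights: "W \<subseteq> weights G"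
    unfolding W_def weights_def using comp_hom by fastforce
  have S_span: "S \<subseteq> graded_span G (nat_span W)"
  proof
    fix s assume "s \<in> S"
    have "comp s m \<in> graded_span G (nat_span W)" if "comp s m \<noteq> 0" for m
      using that \<open>s \<in> S\<close> comp_hom nat_span_generator[OF fin]
      by (intro graded_span_homogeneous[OF ga]) (auto simp: W_def)
    then show "s \<in> graded_span G (nat_span W)"
      by (subst comp_sum) (auto intro: graded_span_sum[OF ga])
  qed
  have all: "UNIV \<subseteq> graded_span G (nat_span W)"
    using subalg_gen_subset_graded_span[OF sf ga nat_span_zero nat_span_add S_span] S(2) by simp
  have "weights G \<subseteq> nat_span W"
  proof
    fix v assume "v \<in> weights G"
    then obtain x where "x \<in> G v" "x \<noteq> 0"
      using graded_algebra_zero[OF ga] unfolding weights_def by blast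
    then show "v \<in> nat_span W" using degree_in_graded_span[OF ga] all by blast
  qed
  then show ?thesis using fin W_weights by blast
qed

lemma nat_seq_incseq_subseq:
  fixes s :: "nat \<Rightarrow> nat"
  obtains r where "strict_mono r" "incseq (\<lambda>k. s (r k))"
proof -
  obtain f where f: "strict_mono f" "monoseq (\<lambda>k. s (f k))" using seq_monosub by blast
  show ?thesis
  proof (cases "incseq (\<lambda>k. s (f k))")
    case True
    then show ?thesis using that f(1) by blast
  next
    case False
    then have dec: "decseq (\<lambda>k. s (f k))" using f(2) monoseq_iff by blast
    define t where "t k = s (f k)" for k
    have t_dec: "t k \<le> t j" if "j \<le> k" for j k
      using dec that unfolding t_def decseq_def by blast
    have "range t \<subseteq> {..t 0}" using t_dec by blast
    then have fin: "finite (range t)" using finite_subset by blast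
    obtain N where N: "t N = Min (range t)"
      using Min_in[OF fin] by (metis empty_not_UNIV image_is_empty imageE)
    have const: "t (k + N) = t N" for k
      using t_dec[of N "k + N"] Min_le[OF fin, of "t (k + N)"] N by simp
    have "incseq (\<lambda>k. s (f (k + N)))"
      using const unfolding t_def incseq_def by simp
    moreover have "strict_mono (\<lambda>k. f (k + N))"
      using f(1) unfolding strict_mono_def by simp
    ultimately show ?thesis using that by blast
  qed
qed

lemma dickson_subseq:
  fixes v :: "'i \<Rightarrow> nat \<Rightarrow> nat"
  assumes "finite I"
  shows "\<exists>r. strict_mono r \<and> (\<forall>i\<in>I. incseq (\<lambda>k. v i (r k)))"
  using assms
proof (induction I rule: finite_induct)
  case empty
  show ?case using strict_mono_id by blast
next
  case (insert a I)
  then obtain r where r: "strict_mono r" "\<forall>i\<in>I. incseq (\<lambda>k. v i (r k))" by blast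
  obtain r' where r': "strict_mono r'" "incseq (\<lambda>k. v a (r (r' k)))"
    using nat_seq_incseq_subseq[of "\<lambda>k. v a (r k)"] by blast
  have "incseq (\<lambda>k. v i (r (r' k)))" if "i \<in> I" for i
    using r(2) that strict_mono_leD[OF r'(1)] unfolding incseq_def by blast
  then show ?case using r' strict_mono_o[OF r(1) r'(1)] by (intro exI[of _ "r \<circ> r'"]) (simp add: o_def)
qed

corollary dickson:
  fixes v :: "'i \<Rightarrow> nat \<Rightarrow> nat"
  assumes "finite I"
  obtains p q where "p < q" "\<And>i. i \<in> I \<Longrightarrow> v i p \<le> v i q"
proof -
  obtain r where r: "strict_mono r" "\<forall>i\<in>I. incseq (\<lambda>k. v i (r k))"
    using dickson_subseq[OF assms] by blast
  show ?thesis
    using that[of "r 0" "r 1"] r strict_monoD[OF r(1), of 0 1] unfolding incseq_def by simp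
qed

lemma line_meets_cone:
  fixes G :: "int^'n \<Rightarrow> 'a::zero set" and \<alpha> \<beta> :: int and c :: "int^'n \<Rightarrow> int"
  assumes W: "finite W" "W \<subseteq> weights G" and c_nonneg: "\<forall>w\<in>W. 0 \<le> c w"
    and ab: "0 \<le> \<alpha>" "0 \<le> \<beta>" "0 < \<alpha> + \<beta>"
    and comb: "\<alpha> *s e1 + \<beta> *s e2 = (\<Sum>w\<in>W. c w *s w)"
  shows "line_through e1 e2 \<inter> weight_cone G \<noteq> {}"
proof -
  define \<sigma> where "\<sigma> = (of_int (\<alpha> + \<beta>) :: rat)"
  have \<sigma>: "\<sigma> > 0" using ab unfolding \<sigma>_def by simp
  define t where "t = of_int \<alpha> / \<sigma>"
  define u where "u = (\<chi> i. t * of_int (e1$i) + (1 - t) * of_int (e2$i) :: rat^'n)"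
  have "u \<in> line_through e1 e2" unfolding line_through_def u_def by (intro CollectI exI[of _ t]) simp
  moreover have "u $ i = (\<Sum>w\<in>W. of_int (c w) / \<sigma> * of_int (w $ i))" for i
  proof -
    have comb_i: "of_int \<alpha> * of_int (e1$i) + of_int \<beta> * of_int (e2$i)
        = (\<Sum>w\<in>W. of_int (c w) * of_int (w$i) :: rat)"
      using arg_cong[OF comb, of "\<lambda>v. of_int (v$i) :: rat"] by simp
    have "1 - t = of_int \<beta> / \<sigma>" using \<sigma> unfolding t_def \<sigma>_def by (simp add: field_simps)
    then have "u $ i = (of_int \<alpha> * of_int (e1$i) + of_int \<beta> * of_int (e2$i)) / \<sigma>"
      unfolding u_def t_def by (simp add: add_divide_distrib)
    also have "\<dots> = (\<Sum>w\<in>W. of_int (c w) / \<sigma> * of_int (w $ i))"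
      unfolding comb_i sum_divide_distrib by simp
    finally show ?thesis .
  qed
  then have "u \<in> weight_cone G"
    unfolding weight_cone_def using W c_nonneg \<sigma>
    by (intro CollectI exI[of _ W] exI[of _ "\<lambda>w. of_int (c w) / \<sigma>"]) auto
  ultimately show ?thesis by blast
qed

definition segment_degrees :: "int^'n \<Rightarrow> int^'n \<Rightarrow> int^'n \<Rightarrow> nat \<Rightarrow> (int^'n) set" where
  "segment_degrees e1 e2 m n = {m + int j *s e1 + int (n - j) *s e2 | j. j \<le> n}"

text \<open>Otherwise choose such a weight J n for every n, write it
  in the monoid generated by W, and compare two of them by Dickson's lemma.\<close>
lemma segment_avoids_weights:
  fixes G :: "int^'n \<Rightarrow> 'a::zero set"
  assumes W: "finite W" "W \<subseteq> weights G" "weights G \<subseteq> nat_span W"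
    and disjoint: "line_through e1 e2 \<inter> weight_cone G = {}"
  shows "\<exists>n. segment_degrees e1 e2 m n \<inter> weights G = {}"
proof (rule ccontr)
  define point where "point n j = m + int j *s e1 + int (n - j) *s e2" for n j
  assume "\<nexists>n. segment_degrees e1 e2 m n \<inter> weights G = {}"
  then have "\<forall>n. \<exists>j. j \<le> n \<and> point n j \<in> weights G"
    unfolding segment_degrees_def point_def by blast
  then obtain J where "\<forall>n. J n \<le> n \<and> point n (J n) \<in> weights G"
    using choice[of "\<lambda>n j. j \<le> n \<and> point n j \<in> weights G"] by blast
  then have J: "\<And>n. J n \<le> n" "\<And>n. point n (J n) \<in> weights G" by simp_all
  have "\<forall>n. \<exists>c::int^'n \<Rightarrow> nat. point n (J n) = (\<Sum>w\<in>W. int (c w) *s w)"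
    using J(2) W(3) unfolding nat_span_def by blast
  then obtain C where "\<forall>n. point n (J n) = (\<Sum>w\<in>W. int (C n w) *s w)"
    using choice[of "\<lambda>n c. point n (J n) = (\<Sum>w\<in>W. int (c w) *s w)"] by blast
  then have C: "\<And>n. point n (J n) = (\<Sum>w\<in>W. int (C n w) *s w)" by simp
  define v where "v = case_sum (\<lambda>w n. C n w) (\<lambda>b n. if b then J n else n - J n)"
  have "finite (Inl ` W \<union> Inr ` (UNIV :: bool set))" using W(1) by simp
  then obtain p q where "p < q" and le: "\<And>i. i \<in> Inl ` W \<union> Inr ` UNIV \<Longrightarrow> v i p \<le> v i q"
    by (rule dickson[where v = v]) blast+
  have C_le: "C p w \<le> C q w" if "w \<in> W" for w using le[of "Inl w"] that by (simp add: v_def)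
  have Inr_in: "Inr b \<in> Inl ` W \<union> Inr ` UNIV" for b by blast
  have J_le: "J p \<le> J q" and rest_le: "p - J p \<le> q - J q"
    using le[OF Inr_in, of True] le[OF Inr_in, of False] by (simp_all add: v_def)
  define \<alpha> where "\<alpha> = int (J q) - int (J p)"
  define \<beta> where "\<beta> = int (q - J q) - int (p - J p)"
  have "\<alpha> *s e1 + \<beta> *s e2 = point q (J q) - point p (J p)"
    unfolding \<alpha>_def \<beta>_def point_def by (simp add: vec_eq_iff algebra_simps)
  also have "\<dots> = (\<Sum>w\<in>W. (int (C q w) - int (C p w)) *s w)"
    unfolding C by (simp add: vec_eq_iff sum_subtractf left_diff_distrib)
  finally have "line_through e1 e2 \<inter> weight_cone G \<noteq> {}"
    using J(1)[of p] J(1)[of q] \<open>p < q\<close> J_le rest_le C_le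
    by (intro line_meets_cone[OF W(1,2)]) (auto simp: \<alpha>_def \<beta>_def)
  then show False using disjoint by blast
qed

lemma derivation_additive: "K_derivation K D \<Longrightarrow> additive D"
  unfolding K_derivation_def additive_def by blast

lemma additive_funpow:
  fixes D :: "'a::ab_group_add \<Rightarrow> 'a"
  assumes "additive D"
  shows "additive (D ^^ n)"
  using assms unfolding additive_def by (induction n) simp_all

text \<open>For an additive map, the vectors killed by some iterate form a subgroup; in particular
  they are closed under finite sums.\<close>
lemma nilpotent_vectors_sum:
  fixes D :: "'a::ab_group_add \<Rightarrow> 'a"
  assumes D: "additive D" and nil: "\<And>a. a \<in> A \<Longrightarrow> \<exists>n. (D ^^ n) (f a) = 0"
  shows "\<exists>n. (D ^^ n) (sum f A) = 0"
  using nil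
proof (induction A rule: infinite_finite_induct)
  case (insert a A)
  then obtain k l where k: "(D ^^ k) (f a) = 0" and l: "(D ^^ l) (sum f A) = 0" by blast
  have vanish: "(D ^^ (i + j)) y = 0" if "(D ^^ j) y = 0" for i j y
    using that by (simp add: funpow_add additive.zero[OF additive_funpow[OF D]])
  have "(D ^^ (l + k)) (f a + sum f A) = 0"
    using vanish[OF k, of l] vanish[OF l, of k]
    by (simp add: additive.add[OF additive_funpow[OF D]] add.commute)
  then show ?case using insert(1,2) by auto
qed (rule exI[of _ 0], simp)+

lemma locally_nilpotent_if_nilpotent_on_components:
  assumes ga: "graded_algebra K G" and D: "additive D"
    and comp: "\<And>m. \<exists>n. \<forall>x\<in>G m. (D ^^ n) x = 0"
  shows "locally_nilpotent D"
  unfolding locally_nilpotent_def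
proof
  fix a
  obtain f where f: "\<And>m. f m \<in> G m" "a = (\<Sum>m\<in>{m. f m \<noteq> 0}. f m)"
    using graded_algebra_decomposition[OF ga] by blast
  have "\<exists>n. (D ^^ n) (f m) = 0" for m using comp[of m] f(1)[of m] by blast
  then show "\<exists>n. (D ^^ n) a = 0" unfolding f(2) by (intro nilpotent_vectors_sum[OF D])
qed

lemma homogeneous_graded_span:
  assumes ga: "graded_algebra K G" and D: "additive D" "homogeneous_of_degree G D e"
    and x: "x \<in> graded_span G P"
  shows "D x \<in> graded_span G ((\<lambda>p. p + e) ` P)"
proof -
  from x obtain f F where f: "F \<subseteq> P" "\<forall>m. f m \<in> G m" "x = sum f F"
    unfolding graded_span_def by blast
  have "D (f m) \<in> graded_span G ((\<lambda>p. p + e) ` P)" if "m \<in> F" for m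
    using that f D(2) unfolding homogeneous_of_degree_def
    by (intro graded_span_homogeneous[OF ga]) auto
  then show ?thesis
    unfolding f(3) additive.sum[OF D(1)] by (rule graded_span_sum[OF ga])
qed

lemma segment_degrees_zero: "segment_degrees e1 e2 m 0 = {m}"
  unfolding segment_degrees_def by simp

lemma segment_degrees_shift:
  assumes "p \<in> segment_degrees e1 e2 m n"
  shows "p + e1 \<in> segment_degrees e1 e2 m (Suc n)" and "p + e2 \<in> segment_degrees e1 e2 m (Suc n)"
proof -
  obtain j where j: "j \<le> n" "p = m + int j *s e1 + int (n - j) *s e2"
    using assms unfolding segment_degrees_def by blast
  have "p + e1 = m + int (Suc j) *s e1 + int (Suc n - Suc j) *s e2"
    using j by (simp add: vec_eq_iff algebra_simps)
  then show "p + e1 \<in> segment_degrees e1 e2 m (Suc n)"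
    unfolding segment_degrees_def using j(1) by blast
  have "p + e2 = m + int j *s e1 + int (Suc n - j) *s e2"
    using j by (simp add: vec_eq_iff algebra_simps Suc_diff_le)
  then show "p + e2 \<in> segment_degrees e1 e2 m (Suc n)"
    unfolding segment_degrees_def using j(1) by (intro CollectI exI[of _ j]) simp
qed

lemma sum_of_homogeneous_iterate:
  assumes ga: "graded_algebra K G"
    and D1: "additive D1" "homogeneous_of_degree G D1 e1"
    and D2: "additive D2" "homogeneous_of_degree G D2 e2"
    and x: "x \<in> G m"
  shows "((\<lambda>x. D1 x + D2 x) ^^ n) x \<in> graded_span G (segment_degrees e1 e2 m n)"
proof (induction n)
  case 0
  then show ?case using graded_span_homogeneous[OF ga _ x] by (simp add: segment_degrees_zero)
next
  case (Suc n)
  let ?y = "((\<lambda>x. D1 x + D2 x) ^^ n) x"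
  have shift: "(\<lambda>p. p + e) ` segment_degrees e1 e2 m n \<subseteq> segment_degrees e1 e2 m (Suc n)"
    if "e \<in> {e1, e2}" for e
    using that segment_degrees_shift by blast
  have "D1 ?y \<in> graded_span G (segment_degrees e1 e2 m (Suc n))"
    using homogeneous_graded_span[OF ga D1 Suc] graded_span_mono[OF shift[of e1]] by blast
  moreover have "D2 ?y \<in> graded_span G (segment_degrees e1 e2 m (Suc n))"
    using homogeneous_graded_span[OF ga D2 Suc] graded_span_mono[OF shift[of e2]] by blast
  ultimately show ?case by (simp add: graded_span_add[OF ga])
qed

theorem proposition6p3:
  fixes K :: "'a::{idom, ring_char_0} set"
    and G :: "int^'n \<Rightarrow> 'a set"
    and D1 D2 :: "'a \<Rightarrow> 'a"
    and e1 e2 :: "int^'n"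
  assumes "alg_closed_subfield K"
    and "finitely_generated_algebra K"
    and "graded_algebra K G"
    and "effective G"
    and "K_derivation K D1" and "homogeneous_of_degree G D1 e1" and "locally_nilpotent D1"
    and "K_derivation K D2" and "homogeneous_of_degree G D2 e2" and "locally_nilpotent D2"
    and "line_through e1 e2 \<inter> weight_cone G = {}"
  shows "locally_nilpotent (\<lambda>x. D1 x + D2 x)"
proof -
  have sf: "subfield K" using assms(1) unfolding alg_closed_subfield_def by blast
  have D1: "additive D1" and D2: "additive D2"
    using assms(5,8) by (simp_all add: derivation_additive)
  then have D: "additive (\<lambda>x. D1 x + D2 x)"
    unfolding additive_def using additive.add[OF D1] additive.add[OF D2] by (simp add: algebra_simps)
  obtain W where W: "finite W" "W \<subseteq> weights G" "weights G \<subseteq> nat_span W"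
    using weights_finitely_generated[OF sf assms(3,2)] by blast
  have "\<exists>n. \<forall>x\<in>G m. ((\<lambda>x. D1 x + D2 x) ^^ n) x = 0" for m
  proof -
    obtain n where n: "segment_degrees e1 e2 m n \<inter> weights G = {}"
      using segment_avoids_weights[OF W assms(11)] by blast
    have "((\<lambda>x. D1 x + D2 x) ^^ n) x = 0" if "x \<in> G m" for x
      using graded_span_of_nonweights[OF n
          sum_of_homogeneous_iterate[OF assms(3) D1 assms(6) D2 assms(9) that]] .
    then show ?thesis by blast
  qed
  then show ?thesis by (rule locally_nilpotent_if_nilpotent_on_components[OF assms(3) D])
qed

end
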